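(* Let $n, m \geq 0$ be integers of the same parity. Then $a(n) <_4 a(m)$ if and only if $t(m) < t(n)$, and $a(n) \leq_4 a(m)$ if and only if $t(m) \leq t(n)$.
   Context: The Thue–Morse sequence $(t(n))_{n\geq 0}$ is defined by $t(0)=0$, $t(2n)=t(n)$, $t(2n+1)=1-t(n)$. $(a(n))_{n\geq0}$ is the increasing sequence (indexed from $0$, $a(0)=1$) of odious numbers, i.e. nonnegative integers whose sum of binary digits is odd. For integers $x, y$, let $\bar x, \bar y \in \{0,1,2,3\}$ be their residues modulo $4$; write $x <_4 y$ if $\bar x < \bar y$ and $x \leq_4 y$ if $\bar x \leq \bar y$ (and $x >_4 y$, $x \geq_4 y$ mean $y <_4 x$, $y \leq_4 x$). *)

theory Defs
  imports Main "HOL-Library.Infinite_Set"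
begin

fun thue_morse :: "nat \<Rightarrow> nat" where
  "thue_morse n = (if n = 0 then 0
     else if even n then thue_morse (n div 2) else 1 - thue_morse (n div 2))"

fun bin_digit_sum :: "nat \<Rightarrow> nat" where
  "bin_digit_sum n = (if n = 0 then 0 else n mod 2 + bin_digit_sum (n div 2))"

definition odious :: "nat \<Rightarrow> bool" where
  "odious k \<longleftrightarrow> odd (bin_digit_sum k)"

(* a(n): n-th odious number in increasing order, indexed from 0 *)
definition odious_seq :: "nat \<Rightarrow> nat" where
  "odious_seq n = enumerate {k. odious k} n"

definition lt4 :: "nat \<Rightarrow> nat \<Rightarrow> bool" where
  "lt4 x y \<longleftrightarrow> x mod 4 < y mod 4"

definition le4 :: "nat \<Rightarrow> nat \<Rightarrow> bool" where
  "le4 x y \<longleftrightarrow> x mod 4 \<le> y mod 4"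

end

theory Submission
  imports Defs
begin

text \<open>Odious numbers come in consecutive pairs: of \<open>2k\<close> and \<open>2k+1\<close> exactly one is odious, namely
  \<open>2k + 1 - t(k)\<close>. Hence \<open>a(n) = 2n + 1 - t(n)\<close>, so \<open>a(n) mod 4\<close> is \<open>1 - t(n)\<close> for even \<open>n\<close>
  and \<open>3 - t(n)\<close> for odd \<open>n\<close>; for indices of equal parity, comparing residues modulo 4 is
  therefore comparing the Thue--Morse values in reverse order.\<close>

declare thue_morse.simps[simp del] bin_digit_sum.simps[simp del]

lemma thue_morse_0 [simp]: "thue_morse 0 = 0"
  by (simp add: thue_morse.simps)

lemma thue_morse_double [simp]: "thue_morse (2 * k) = thue_morse k"
  by (cases "k = 0") (simp_all add: thue_morse.simps[of "2 * k"])

lemma thue_morse_Suc_double [simp]: "thue_morse (Suc (2 * k)) = 1 - thue_morse k"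
  by (simp add: thue_morse.simps[of "Suc (2 * k)"])

lemma thue_morse_cases: "thue_morse n = 0 \<or> thue_morse n = 1"
proof (induction n rule: nat_bit_induct)
  case (odd n)
  then show ?case by (auto simp del: One_nat_def)
qed simp_all

lemma bin_digit_sum_double [simp]: "bin_digit_sum (2 * k) = bin_digit_sum k"
  by (cases "k = 0") (simp_all add: bin_digit_sum.simps[of "2 * k"])

lemma bin_digit_sum_Suc_double [simp]: "bin_digit_sum (Suc (2 * k)) = Suc (bin_digit_sum k)"
  by (simp add: bin_digit_sum.simps[of "Suc (2 * k)"])

lemma odious_iff_thue_morse: "odious k \<longleftrightarrow> thue_morse k = 1"
proof -
  have "thue_morse k = bin_digit_sum k mod 2"
  proof (induction k rule: nat_bit_induct)
    case zero
    then show ?case by (simp add: bin_digit_sum.simps)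
  next
    case (odd n)
    then show ?case by (simp add: mod_Suc)
  qed simp
  then show ?thesis
    unfolding odious_def by presburger
qed

lemma enumerate_eq_strict_mono:
  fixes f :: "nat \<Rightarrow> nat"
  assumes "strict_mono f" and "range f = S"
  shows "enumerate S n = f n"
proof (induction n)
  case 0
  have "(LEAST s. s \<in> S) = f 0"
    using assms by (intro Least_equality) (auto simp: strict_mono_less_eq)
  then show ?case by (simp add: enumerate_0)
next
  case (Suc n)
  have "infinite S"
    using assms range_inj_infinite strict_mono_imp_inj_on by blast
  then have "enumerate S (Suc n) = (LEAST s. s \<in> S \<and> f n < s)"
    by (simp add: enumerate_Suc'' Suc)
  also have "\<dots> = f (Suc n)"
    using assms by (intro Least_equality) (auto simp: strict_mono_less strict_mono_less_eq Suc_le_eq)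
  finally show ?case .
qed

definition odious_closed_form :: "nat \<Rightarrow> nat" where
  "odious_closed_form n = 2 * n + 1 - thue_morse n"

lemma strict_mono_odious_closed_form: "strict_mono odious_closed_form"
proof (rule strict_mono_Suc_iff[THEN iffD2], intro allI)
  fix n
  show "odious_closed_form n < odious_closed_form (Suc n)"
    using thue_morse_cases[of n] thue_morse_cases[of "Suc n"]
    by (auto simp: odious_closed_form_def)
qed

lemma range_odious_closed_form: "range odious_closed_form = {k. odious k}"
proof (intro set_eqI iffI)
  fix s
  assume "s \<in> range odious_closed_form"
  then obtain n where "s = odious_closed_form n" by blast
  then show "s \<in> {k. odious k}"
    using thue_morse_cases[of n]
    by (auto simp: odious_closed_form_def odious_iff_thue_morse)
next
  fix s
  assume "s \<in> {k. odious k}"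
  then have odious_s: "thue_morse s = 1" by (simp add: odious_iff_thue_morse)
  have "s = odious_closed_form (s div 2)"
  proof (cases "even s")
    case True
    then obtain k where "s = 2 * k" by blast
    then show ?thesis using odious_s by (simp add: odious_closed_form_def)
  next
    case False
    then obtain k where "s = Suc (2 * k)" using oddE by fastforce
    then show ?thesis
      using odious_s thue_morse_cases[of k] by (auto simp: odious_closed_form_def)
  qed
  then show "s \<in> range odious_closed_form" by blast
qed

lemma odious_seq_eq_closed_form: "odious_seq n = odious_closed_form n"
  unfolding odious_seq_def
  by (rule enumerate_eq_strict_mono[OF strict_mono_odious_closed_form range_odious_closed_form])

lemma odious_seq_mod_4: "odious_seq n mod 4 = (if even n then 1 else 3) - thue_morse n"
proof -
  have "odious_seq n = 4 * (n div 2) + ((if even n then 1 else 3) - thue_morse n)"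
    using thue_morse_cases[of n]
    by (auto simp: odious_seq_eq_closed_form odious_closed_form_def elim!: evenE oddE)
  then show ?thesis by simp
qed

theorem lemma2:
  fixes n m :: nat
  assumes "even n \<longleftrightarrow> even m"
  shows "(lt4 (odious_seq n) (odious_seq m) \<longleftrightarrow> thue_morse m < thue_morse n)
       \<and> (le4 (odious_seq n) (odious_seq m) \<longleftrightarrow> thue_morse m \<le> thue_morse n)"
  unfolding lt4_def le4_def odious_seq_mod_4
  using assms thue_morse_cases[of n] thue_morse_cases[of m]
  by (cases "even n") (auto simp del: One_nat_def)

end
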